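(* Let $b\geq 1$ be odd, let $n,k$ be positive integers with $k\leq n-2$, and let $\mathbf{s}=s_1\ldots s_k$ be an integer sequence such that the set $\mathbf{s}\,|\,R_n(b)$ is nonempty. Let $\mathbf{t}$ be the $\prec$-first sequence in $\mathbf{s}\,|\,R_n(b)$, and let $M=\min\{b,\max\{s_i\}_{i=1}^k+1\}$. Then: (1) if $\sum_{i=1}^k s_i$ is odd and $M$ is odd, then $\mathbf{t}=\mathbf{s}M0\ldots0$; (2) if $\sum_{i=1}^k s_i$ is odd and $M$ is even, then $\mathbf{t}=\mathbf{s}M(M+1)0\ldots0$; (3) if $\sum_{i=1}^k s_i$ is even, then $\mathbf{t}=\mathbf{s}0\ldots0$. (In each case the trailing zeros fill the sequence up to length $n$.)
   Context: A restricted growth function of length $n$ is an integer sequence $s_1\ldots s_n$ with $s_1=0$ and $0\leq s_{i+1}\leq \max\{s_j\}_{j=1}^i+1$ for $1\leq i\leq n-1$; $R_n$ is the set of these. For an integer $b\geq1$, $R_n(b)=\{s_1\ldots s_n\in R_n: \max_i s_i\leq b\}$. For a sequence $\mathbf{u}$ and a set $S$ of sequences, $\mathbf{u}\,|\,S$ denotes the subset of $S$ of sequences having prefix $\mathbf{u}$. The Reflected Gray Code Order $\prec$ on length-$n$ sequences of nonnegative integers: $s_1\ldots s_n\prec t_1\ldots t_n$ if, for the smallest $k$ with $s_k\neq t_k$, either $\sum_{i=1}^{k-1}s_i$ is even and $s_k<t_k$, or $\sum_{i=1}^{k-1}s_i$ is odd and $s_k>t_k$. The $\prec$-first sequence of a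 set is its smallest element with respect to $\prec$. *)

theory Defs
  imports Main
begin

(* Sequences s_1 ... s_n are represented as lists of integers; s_i = s ! (i-1). *)

definition rgf :: "nat \<Rightarrow> int list set" where
  "rgf n = {s. length s = n \<and> (n > 0 \<longrightarrow> s ! 0 = 0) \<and>
      (\<forall>i. 1 \<le> i \<and> i < n \<longrightarrow> 0 \<le> s ! i \<and> s ! i \<le> Max (set (take i s)) + 1)}"

definition rgf_b :: "nat \<Rightarrow> int \<Rightarrow> int list set" where
  "rgf_b n b = {s \<in> rgf n. \<forall>x \<in> set s. x \<le> b}"

definition with_prefix :: "int list \<Rightarrow> int list set \<Rightarrow> int list set" where
  "with_prefix u S = {t \<in> S. take (length u) t = u}"

definition gray_less :: "int list \<Rightarrow> int list \<Rightarrow> bool" where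
  "gray_less s t \<longleftrightarrow> length s = length t \<and>
     (\<exists>k < length s. take k s = take k t \<and> s ! k \<noteq> t ! k \<and>
        ((even (sum_list (take k s)) \<and> s ! k < t ! k) \<or>
         (odd (sum_list (take k s)) \<and> s ! k > t ! k)))"

definition gray_first :: "int list set \<Rightarrow> int list \<Rightarrow> bool" where
  "gray_first S t \<longleftrightarrow> t \<in> S \<and> (\<forall>u \<in> S. u \<noteq> t \<longrightarrow> gray_less t u)"

end

theory Submission imports Defs begin

text \<open>
  The \<prec>-first extension of a prefix is built greedily: each further entry is the
  \<prec>-smallest value admissible after the current prefix, namely 0 if the prefix sum is even
  and the largest admissible value \<open>min b (max + 1)\<close> if it is odd. Every admissible entry lies
  between these two bounds, so no competitor can beat the greedy sequence at the first position
  where they differ. Running the greedy process gives the three cases: an even prefix sum yields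
  zeros forever; after an odd one the entry M is appended, and if M is even then M \<noteq> b (b is odd),
  so M = max + 1 becomes the new maximum, the next entry is M + 1, and the sum is even again.
\<close>

lemma rgf_nth_nonneg: "u \<in> rgf n \<Longrightarrow> i < n \<Longrightarrow> 0 \<le> u ! i"
  unfolding rgf_def by (cases "i = 0") auto

lemma rgf_nth_le_Max: "u \<in> rgf n \<Longrightarrow> 1 \<le> i \<Longrightarrow> i < n \<Longrightarrow> u ! i \<le> Max (set (take i u)) + 1"
  unfolding rgf_def by auto

lemma gray_first_eqI:
  assumes "gray_first S t" "c \<in> S" "\<forall>u\<in>S. \<not> gray_less u c"
  shows "t = c"
  using assms unfolding gray_first_def by (metis (full_types))

definition gray_next :: "int \<Rightarrow> int list \<Rightarrow> int" where
  "gray_next b p = (if even (sum_list p) then 0 else min b (Max (set p) + 1))"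

fun gray_greedy :: "int \<Rightarrow> int list \<Rightarrow> nat \<Rightarrow> int list" where
  "gray_greedy b p 0 = p"
| "gray_greedy b p (Suc m) = gray_greedy b (p @ [gray_next b p]) m"

lemma length_gray_greedy [simp]: "length (gray_greedy b p m) = length p + m"
  by (induction m arbitrary: p) auto

lemma take_gray_greedy: "take (length p) (gray_greedy b p m) = p"
proof (induction m arbitrary: p)
  case (Suc m)
  let ?g = "gray_greedy b (p @ [gray_next b p]) m"
  have "take (length p) ?g = take (length p) (take (length (p @ [gray_next b p])) ?g)"
    by (simp only: take_take) simp
  also have "\<dots> = p" by (simp only: Suc.IH) simp
  finally show ?case by simp
qed simp

lemma nth_gray_greedy:
  assumes "length p \<le> j" "j < length p + m"
  shows "gray_greedy b p m ! j = gray_next b (take j (gray_greedy b p m))"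
  using assms
proof (induction m arbitrary: p)
  case (Suc m)
  let ?q = "p @ [gray_next b p]"
  let ?g = "gray_greedy b ?q m"
  show ?case
  proof (cases "j = length p")
    case True
    have q: "take (Suc j) ?g = ?q"
      using take_gray_greedy[of ?q] True by simp
    have "?g ! j = take (Suc j) ?g ! j" by simp
    also have "\<dots> = gray_next b p" unfolding q using True by simp
    finally have "?g ! j = gray_next b p" .
    moreover have "take j ?g = p"
      using arg_cong[OF q, of "take j"] True by (simp add: min_def)
    ultimately show ?thesis by simp
  next
    case False
    then show ?thesis using Suc by simp
  qed
qed simp

lemma gray_next_bounds:
  assumes "0 \<le> b" "0 \<in> set p"
  shows "0 \<le> gray_next b p" "gray_next b p \<le> b" "gray_next b p \<le> Max (set p) + 1"
proof -
  have "0 \<le> Max (set p)" using assms(2) by simp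
  then show "0 \<le> gray_next b p" "gray_next b p \<le> b" "gray_next b p \<le> Max (set p) + 1"
    using assms(1) unfolding gray_next_def by auto
qed

lemma rgf_b_nth_vs_gray_next:
  assumes "u \<in> rgf_b n b" "1 \<le> j" "j < n"
  shows "even (sum_list (take j u)) \<Longrightarrow> gray_next b (take j u) \<le> u ! j"
    and "odd (sum_list (take j u)) \<Longrightarrow> u ! j \<le> gray_next b (take j u)"
proof -
  have u: "u \<in> rgf n" "\<forall>x\<in>set u. x \<le> b" using assms(1) unfolding rgf_b_def by auto
  then have "u ! j \<in> set u" using assms(3) unfolding rgf_def by auto
  with u have "u ! j \<le> b" by blast
  moreover have "0 \<le> u ! j" "u ! j \<le> Max (set (take j u)) + 1"
    using rgf_nth_nonneg[OF u(1) assms(3)] rgf_nth_le_Max[OF u(1) assms(2,3)] by auto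
  ultimately show "even (sum_list (take j u)) \<Longrightarrow> gray_next b (take j u) \<le> u ! j"
    and "odd (sum_list (take j u)) \<Longrightarrow> u ! j \<le> gray_next b (take j u)"
    unfolding gray_next_def by auto
qed

lemma gray_greedy_in_with_prefix:
  assumes u: "u \<in> with_prefix s (rgf_b n b)" and s: "s \<noteq> []"
  shows "gray_greedy b s (n - length s) \<in> with_prefix s (rgf_b n b)"
proof -
  let ?g = "gray_greedy b s (n - length s)"
  have ub: "u \<in> rgf_b n b" and us: "take (length s) u = s"
    using u unfolding with_prefix_def by auto
  have ur: "u \<in> rgf n" and ule: "\<forall>x\<in>set u. x \<le> b" and lu: "length u = n"
    using ub unfolding rgf_b_def rgf_def by auto
  have sn: "length s \<le> n" using arg_cong[OF us, of length] lu by auto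
  have lg: "length ?g = n" using sn by simp
  have gs: "take (length s) ?g = s" by (rule take_gray_greedy)
  have g_u: "take i ?g = take i u" "?g ! i = u ! i" if "i < length s" for i
    using that gs us by (metis min.strict_order_iff take_take, metis nth_take)
  have u0: "u ! 0 = 0" using ur s sn unfolding rgf_def by auto
  have b0: "0 \<le> b" using ule u0 lu s sn by (metis length_greater_0_conv less_le_trans nth_mem)
  have g0: "?g ! 0 = 0" using g_u(2)[of 0] u0 s by simp
  have zero_in: "0 \<in> set (take i ?g)" if "1 \<le> i" "i \<le> n" for i
    using g0 that lg by (metis in_set_conv_nth length_take less_le_trans min.absorb2 nth_take zero_less_one)
  have grow: "0 \<le> ?g ! i \<and> ?g ! i \<le> Max (set (take i ?g)) + 1" if i: "1 \<le> i" "i < n" for i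
  proof (cases "i < length s")
    case True
    then show ?thesis using g_u rgf_nth_nonneg[OF ur i(2)] rgf_nth_le_Max[OF ur i] by simp
  next
    case False
    then have "?g ! i = gray_next b (take i ?g)" using i sn by (simp add: nth_gray_greedy)
    then show ?thesis using gray_next_bounds[OF b0 zero_in] i by simp
  qed
  have bounded: "?g ! i \<le> b" if i: "i < n" for i
  proof (cases "i < length s")
    case True
    then show ?thesis using g_u ule lu i by simp
  next
    case False
    then have "?g ! i = gray_next b (take i ?g)" using i sn by (simp add: nth_gray_greedy)
    moreover have "1 \<le> i" using False s by (cases s) auto
    ultimately show ?thesis using gray_next_bounds[OF b0 zero_in] i by simp
  qed
  have "?g \<in> rgf n" unfolding rgf_def using lg g0 grow by simp
  moreover have "\<forall>x\<in>set ?g. x \<le> b" using bounded lg by (metis in_set_conv_nth)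
  ultimately show ?thesis unfolding with_prefix_def rgf_b_def using gs by blast
qed

lemma not_gray_less_gray_greedy:
  assumes u: "u \<in> with_prefix s (rgf_b n b)" and s: "s \<noteq> []"
  shows "\<not> gray_less u (gray_greedy b s (n - length s))"
proof
  let ?g = "gray_greedy b s (n - length s)"
  assume "gray_less u ?g"
  then obtain j where j: "j < length u" "take j u = take j ?g" "u ! j \<noteq> ?g ! j"
    "(even (sum_list (take j u)) \<and> u ! j < ?g ! j) \<or> (odd (sum_list (take j u)) \<and> u ! j > ?g ! j)"
    unfolding gray_less_def by blast
  have ub: "u \<in> rgf_b n b" and us: "take (length s) u = s"
    using u unfolding with_prefix_def by auto
  have lu: "length u = n" using ub unfolding rgf_b_def rgf_def by auto
  show False
  proof (cases "j < length s")
    case True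
    then have "u ! j = ?g ! j" using us take_gray_greedy[of s b] by (metis nth_take)
    then show False using j(3) by contradiction
  next
    case False
    then have "?g ! j = gray_next b (take j u)" using j(1,2) lu by (simp add: nth_gray_greedy)
    moreover have "1 \<le> j" using False s by (cases s) auto
    ultimately show False using rgf_b_nth_vs_gray_next[OF ub _ j(1)[unfolded lu]] j(4) by fastforce
  qed
qed

theorem gray_first_with_prefix_rgf_b:
  assumes "s \<noteq> []" "gray_first (with_prefix s (rgf_b n b)) t"
  shows "t = gray_greedy b s (n - length s)"
proof -
  have "t \<in> with_prefix s (rgf_b n b)" using assms(2) unfolding gray_first_def by blast
  then show ?thesis
    using gray_first_eqI[OF assms(2)] gray_greedy_in_with_prefix not_gray_less_gray_greedy assms(1) by blast
qed

lemma gray_greedy_even_sum: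
  "even (sum_list p) \<Longrightarrow> gray_greedy b p m = p @ replicate m 0"
  by (induction m arbitrary: p) (simp_all add: gray_next_def replicate_app_Cons_same)

theorem proposition2:
  fixes b :: int and n k :: nat and s t :: "int list"
  assumes "b \<ge> 1" and "odd b"
    and "0 < k" and "k \<le> n - 2"
    and "length s = k"
    and "with_prefix s (rgf_b n b) \<noteq> {}"
    and "gray_first (with_prefix s (rgf_b n b)) t"
  defines "M \<equiv> min b (Max (set s) + 1)"
  shows "(odd (sum_list s) \<and> odd M \<longrightarrow> t = s @ [M] @ replicate (n - k - 1) 0)
       \<and> (odd (sum_list s) \<and> even M \<longrightarrow> t = s @ [M, M + 1] @ replicate (n - k - 2) 0)
       \<and> (even (sum_list s) \<longrightarrow> t = s @ replicate (n - k) 0)"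
proof -
  have s: "s \<noteq> []" using assms(3,5) by auto
  obtain m where m: "n - k = Suc (Suc m)" "n - k - 1 = Suc m" "n - k - 2 = m"
    using assms(3,4) by (intro that[of "n - k - 2"]) auto
  have t: "t = gray_greedy b s (Suc (Suc m))"
    using gray_first_with_prefix_rgf_b[OF s assms(7)] assms(5) m(1) by simp
  have odd_step: "t = gray_greedy b (s @ [M]) (Suc m)" if "odd (sum_list s)"
    using t that by (simp add: gray_next_def M_def)
  have "t = s @ [M] @ replicate (Suc m) 0" if "odd (sum_list s)" "odd M"
    using odd_step that by (simp add: gray_greedy_even_sum del: gray_greedy.simps)
  moreover have "t = s @ [M, M + 1] @ replicate m 0" if odd_s: "odd (sum_list s)" and even_M: "even M"
  proof -
    have "M < b" "M = Max (set s) + 1" using even_M assms(2) unfolding M_def by (auto simp: min_def)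
    then have "Max (set (s @ [M])) = M" using s by (simp add: max_def)
    then have "gray_next b (s @ [M]) = M + 1" using \<open>M < b\<close> odd_s even_M by (simp add: gray_next_def)
    then show ?thesis using odd_step[OF odd_s] odd_s even_M by (simp add: gray_greedy_even_sum)
  qed
  moreover have "t = s @ replicate (Suc (Suc m)) 0" if "even (sum_list s)"
    using t that by (simp only: gray_greedy_even_sum)
  ultimately show ?thesis unfolding m(2,3) unfolding m(1) by blast
qed

end
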